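(* Let $a,b$ be real constants with $|a|,|b|\le 0.01$ and define, for real $x>1$, \[f(x)=\frac{(x+a)(x+1)+2b-2\sqrt{x^3+ax+b}\,\sqrt{1+a+b}}{(1-x)^2}.\] Then $f(x)\ge 0.19$ for all $x>1$. *)

theory Defs
  imports Complex_Main
begin

end

theory Submission
  imports Defs
begin

(* Put x = 1 + t and c = 1 + a + b. Then x^3 + a x + b = c + (3 + a) t + 3 t^2 + t^3, and the
   numerator minus 0.19 (1 - x)^2 is L = 2 c + (3 + a) t + 0.81 t^2, so it suffices that
   L^2 >= 4 c (x^3 + a x + b). The difference of the two sides vanishes to second order at t = 0:
   it equals t^2 ((3 + a)^2 - 8.76 c + (0.86 - 2.38 a - 4 b) t + 0.6561 t^2), and all three
   coefficients are nonnegative when |a|, |b| <= 0.01. *)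

lemma two_sqrt_mult_le:
  fixes p c L :: real
  assumes "0 \<le> L" and "4 * (p * c) \<le> L\<^sup>2"
  shows "2 * sqrt p * sqrt c \<le> L"
proof -
  have "2 * sqrt p * sqrt c = sqrt (4 * (p * c))"
    by (simp add: real_sqrt_mult)
  also have "\<dots> \<le> L"
    using assms by (simp add: real_le_lsqrt)
  finally show ?thesis .
qed

lemma cubic_discriminant_shift:
  fixes c d m t :: real
  shows "(2 * c + d * t + m * t\<^sup>2)\<^sup>2 - 4 * ((c + d * t + 3 * t\<^sup>2 + t ^ 3) * c)
    = t\<^sup>2 * ((d\<^sup>2 + 4 * (m - 3) * c) + (2 * m * d - 4 * c) * t + m\<^sup>2 * t\<^sup>2)"
  by (simp add: algebra_simps power2_eq_square power3_eq_cube)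

lemma two_sqrt_cubic_le_quadratic:
  fixes c d m t :: real
  assumes "0 \<le> 2 * c + d * t + m * t\<^sup>2"
    and "0 \<le> d\<^sup>2 + 4 * (m - 3) * c"
    and "0 \<le> 2 * m * d - 4 * c"
    and "0 \<le> t"
  shows "2 * sqrt (c + d * t + 3 * t\<^sup>2 + t ^ 3) * sqrt c \<le> 2 * c + d * t + m * t\<^sup>2"
proof (rule two_sqrt_mult_le)
  have "0 \<le> t\<^sup>2 * ((d\<^sup>2 + 4 * (m - 3) * c) + (2 * m * d - 4 * c) * t + m\<^sup>2 * t\<^sup>2)"
    using assms(2-4) by simp
  then show "4 * ((c + d * t + 3 * t\<^sup>2 + t ^ 3) * c) \<le> (2 * c + d * t + m * t\<^sup>2)\<^sup>2"
    using cubic_discriminant_shift[of c d t m] by linarith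
qed (use assms(1) in simp)

theorem lemmaA1:
  fixes a b x :: real
  assumes "\<bar>a\<bar> \<le> 0.01" and "\<bar>b\<bar> \<le> 0.01" and "x > 1"
  shows "((x + a) * (x + 1) + 2 * b - 2 * sqrt (x ^ 3 + a * x + b) * sqrt (1 + a + b)) / (1 - x) ^ 2 \<ge> 0.19"
proof -
  define t where "t = x - 1"
  define c where "c = 1 + a + b"
  have ab: "-1/100 \<le> a" "a \<le> 1/100" "-1/100 \<le> b" "b \<le> 1/100"
    using assms(1,2) by auto
  have cubic: "x ^ 3 + a * x + b = c + (3 + a) * t + 3 * t\<^sup>2 + t ^ 3"
    and numerator: "(x + a) * (x + 1) + 2 * b - 0.19 * (1 - x)\<^sup>2 = 2 * c + (3 + a) * t + 81/100 * t\<^sup>2"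
    by (simp_all add: t_def c_def field_simps power2_eq_square power3_eq_cube)
  have "(3 + a)\<^sup>2 + 4 * (81/100 - 3) * c = 24/100 - 276/100 * a - 876/100 * b + a\<^sup>2"
    by (simp add: c_def power2_eq_square field_simps)
  then have "0 \<le> (3 + a)\<^sup>2 + 4 * (81/100 - 3) * c"
    using ab zero_le_power2[of a] by linarith
  moreover have "0 \<le> 2 * (81/100) * (3 + a) - 4 * c"
    using ab by (simp add: c_def)
  moreover have "0 \<le> 2 * c + (3 + a) * t + 81/100 * t\<^sup>2"
    using ab assms(3) by (simp add: c_def t_def)
  ultimately have "2 * sqrt (x ^ 3 + a * x + b) * sqrt c \<le> 2 * c + (3 + a) * t + 81/100 * t\<^sup>2"
    unfolding cubic using assms(3) by (intro two_sqrt_cubic_le_quadratic) (simp_all add: t_def)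
  then have "0.19 * (1 - x)\<^sup>2
      \<le> (x + a) * (x + 1) + 2 * b - 2 * sqrt (x ^ 3 + a * x + b) * sqrt (1 + a + b)"
    using numerator unfolding c_def by linarith
  moreover have "0 < (1 - x)\<^sup>2"
    using assms(3) by simp
  ultimately show ?thesis
    by (simp add: pos_le_divide_eq)
qed

end
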